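(* Let $n\ge2$, $C>0$, $\lambda>0$, and $$0<R<\min\Big\{\frac{x_1}{\lambda},\ \sqrt{\tfrac38(3n-5)(2n-3)^3}\Big\}.$$ Then $u:=u^*-v$ satisfies $$u_t\le\Delta u+uu_r^3\qquad\text{in }(B_R\setminus\{0\})\times(0,\infty).$$
   Context: $B_R=\{x\in\mathbb R^n:|x|<R\}$; radial functions are written in $r=|x|$, subscript $r$ is the radial derivative. $\alpha:=\sqrt[3]{9n-15}$, $u^*(r):=-\alpha r^{1/3}$, $\nu:=\tfrac16\sqrt{36n^2-96n+61}$, $J_\nu$ is the Bessel function of the first kind of order $\nu$, and $v(r,t):=Ce^{-\lambda^2t}r^{n-\frac32}J_\nu(\lambda r)$. $x_0>0$ and $x_1\in(0,x_0)$ denote the first positive roots of $J_\nu$ and of $J_\nu'$, respectively. *)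

theory Defs
  imports "HOL-Analysis.Analysis"
begin

definition bessel_J :: "real \<Rightarrow> real \<Rightarrow> real" where
  "bessel_J nu x = (\<Sum>m. (-1) ^ m / (fact m * Gamma (real m + nu + 1)) * (x / 2) powr (2 * real m + nu))"

definition nu_of :: "nat \<Rightarrow> real" where
  "nu_of n = sqrt (36 * (real n)^2 - 96 * real n + 61) / 6"

definition alpha_of :: "nat \<Rightarrow> real" where
  "alpha_of n = root 3 (9 * real n - 15)"

definition ustar :: "nat \<Rightarrow> real \<Rightarrow> real" where
  "ustar n r = - alpha_of n * r powr (1/3)"

definition vfun :: "nat \<Rightarrow> real \<Rightarrow> real \<Rightarrow> real \<Rightarrow> real \<Rightarrow> real" where
  "vfun n C lm r t = C * exp (- (lm * lm * t)) * r powr (real n - 3/2) * bessel_J (nu_of n) (lm * r)"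

definition usol :: "nat \<Rightarrow> real \<Rightarrow> real \<Rightarrow> real \<Rightarrow> real \<Rightarrow> real" where
  "usol n C lm r t = ustar n r - vfun n C lm r t"

definition x1_of :: "nat \<Rightarrow> real" where
  "x1_of n = (LEAST x. x > 0 \<and> deriv (bessel_J (nu_of n)) x = 0)"

end

(* u* solves the radial steady equation u'' + (n-1)/r u' + u u'^3 = 0, and v is the separated
   solution e^(-lm^2 t) r^a J_nu(lm r), a = n - 3/2, of the equation linearised at u*: the
   constants alpha and nu are exactly those that turn this linearisation into a Bessel operator.
   Expanding the cubic term at u = u* - v, the zeroth and first order parts cancel, and the
   remainder 3 u* u*_r v_r^2 - u* v_r^3 + 3 v u*_r^2 v_r - 3 v u*_r v_r^2 + v v_r^3 is nonnegative
   because u* <= 0, u*_r <= 0, v >= 0 and v_r >= 0. The last two signs hold because lm r < x_1: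
   below the first critical point of J_nu, both J_nu and J_nu' are positive. *)

theory Submission
  imports Defs
begin

definition bessel_coeff :: "real \<Rightarrow> nat \<Rightarrow> real" where
  "bessel_coeff nu m = (-1) ^ m / (fact m * Gamma (real m + nu + 1))"

definition bessel_F :: "real \<Rightarrow> real \<Rightarrow> real" where
  "bessel_F nu z = (\<Sum>m. bessel_coeff nu m * z ^ m)"

definition bessel_F' :: "real \<Rightarrow> real \<Rightarrow> real" where
  "bessel_F' nu z = (\<Sum>m. diffs (bessel_coeff nu) m * z ^ m)"

definition bessel_F'' :: "real \<Rightarrow> real \<Rightarrow> real" where
  "bessel_F'' nu z = (\<Sum>m. diffs (diffs (bessel_coeff nu)) m * z ^ m)"

lemma Gamma_plus1_pos: "(x::real) > 0 \<Longrightarrow> Gamma (x + 1) = x * Gamma x"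
  by (rule Gamma_plus1) (auto dest: nonpos_Ints_nonpos)

lemma Gamma_shift_ge:
  fixes nu :: real
  assumes "nu \<ge> 0"
  shows "Gamma (real m + nu + 1) \<ge> Gamma (nu + 1)"
proof (induction m)
  case (Suc m)
  have pos: "real m + nu + 1 > 0" using assms by simp
  have "Gamma (real m + nu + 1) \<le> (real m + nu + 1) * Gamma (real m + nu + 1)"
    using assms pos by (simp add: Gamma_real_pos)
  also have "\<dots> = Gamma (real (Suc m) + nu + 1)"
    using Gamma_plus1_pos[OF pos] by (simp add: algebra_simps)
  finally show ?case using Suc by linarith
qed simp

lemma summable_bessel_coeff:
  assumes "nu \<ge> 0"
  shows "summable (\<lambda>m. bessel_coeff nu m * z ^ m)"
proof (rule summable_comparison_test')
  show "summable (\<lambda>m. inverse (Gamma (nu + 1)) * (inverse (fact m) * \<bar>z\<bar> ^ m))"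
    by (intro summable_mult summable_exp)
next
  fix m :: nat
  have G0: "Gamma (nu + 1) > 0" and G: "Gamma (nu + 1) \<le> Gamma (real m + nu + 1)"
    using assms Gamma_shift_ge[OF assms] by (simp_all add: Gamma_real_pos)
  have "norm (bessel_coeff nu m * z ^ m) = \<bar>z\<bar> ^ m / (fact m * Gamma (real m + nu + 1))"
    using G G0 by (simp add: bessel_coeff_def abs_mult power_abs)
  also have "\<dots> \<le> \<bar>z\<bar> ^ m / (fact m * Gamma (nu + 1))"
    using G G0 by (intro divide_left_mono mult_left_mono mult_pos_pos) auto
  finally show "norm (bessel_coeff nu m * z ^ m) \<le> inverse (Gamma (nu + 1)) * (inverse (fact m) * \<bar>z\<bar> ^ m)"
    by (simp add: field_simps)
qed

lemma bessel_F_has_derivative: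
  "nu \<ge> 0 \<Longrightarrow> (bessel_F nu has_real_derivative bessel_F' nu z) (at z)"
  unfolding bessel_F_def [abs_def] bessel_F'_def
  by (intro termdiffs_strong_converges_everywhere summable_bessel_coeff)

lemma bessel_F'_has_derivative:
  "nu \<ge> 0 \<Longrightarrow> (bessel_F' nu has_real_derivative bessel_F'' nu z) (at z)"
  unfolding bessel_F'_def [abs_def] bessel_F''_def
  by (intro termdiffs_strong_converges_everywhere termdiff_converges_all summable_bessel_coeff)

lemma bessel_F_chain [derivative_intros]:
  "nu \<ge> 0 \<Longrightarrow> (g has_real_derivative g') (at x) \<Longrightarrow>
    ((\<lambda>x. bessel_F nu (g x)) has_real_derivative bessel_F' nu (g x) * g') (at x)"
  by (rule DERIV_chain2 [OF bessel_F_has_derivative])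

lemma bessel_F'_chain [derivative_intros]:
  "nu \<ge> 0 \<Longrightarrow> (g has_real_derivative g') (at x) \<Longrightarrow>
    ((\<lambda>x. bessel_F' nu (g x)) has_real_derivative bessel_F'' nu (g x) * g') (at x)"
  by (rule DERIV_chain2 [OF bessel_F'_has_derivative])

lemma isCont_bessel_F [continuous_intros]:
  "nu \<ge> 0 \<Longrightarrow> isCont g x \<Longrightarrow> isCont (\<lambda>x. bessel_F nu (g x)) x"
  by (rule isCont_o2 [OF _ DERIV_isCont [OF bessel_F_has_derivative]])

lemma isCont_bessel_F' [continuous_intros]:
  "nu \<ge> 0 \<Longrightarrow> isCont g x \<Longrightarrow> isCont (\<lambda>x. bessel_F' nu (g x)) x"
  by (rule isCont_o2 [OF _ DERIV_isCont [OF bessel_F'_has_derivative]])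

lemma bessel_F_0: "bessel_F nu 0 = 1 / Gamma (nu + 1)"
  using powser_zero[of "bessel_coeff nu"] by (simp add: bessel_F_def bessel_coeff_def)

lemma bessel_coeff_Suc:
  assumes "nu \<ge> 0"
  shows "(real m + nu + 1) * (real m + 1) * bessel_coeff nu (Suc m) + bessel_coeff nu m = 0"
proof -
  have pos: "real m + nu + 1 > 0" using assms by simp
  have G: "Gamma (real (Suc m) + nu + 1) = (real m + nu + 1) * Gamma (real m + nu + 1)"
    using Gamma_plus1_pos[OF pos] by (simp add: algebra_simps)
  have "bessel_coeff nu (Suc m) = - ((-1) ^ m) / ((real m + 1) * fact m * ((real m + nu + 1) * Gamma (real m + nu + 1)))"
    unfolding bessel_coeff_def G by simp
  also have "\<dots> = - bessel_coeff nu m / ((real m + nu + 1) * (real m + 1))"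
    by (simp add: bessel_coeff_def field_simps)
  finally show ?thesis
    using pos by (simp del: of_nat_Suc)
qed

lemma bessel_F_ode:
  assumes "nu \<ge> 0"
  shows "z * bessel_F'' nu z + (nu + 1) * bessel_F' nu z + bessel_F nu z = 0"
proof -
  let ?c = "bessel_coeff nu"
  have "(\<lambda>m. diffs (diffs ?c) m * z ^ m) sums bessel_F'' nu z"
    unfolding bessel_F''_def by (intro summable_sums termdiff_converges_all summable_bessel_coeff assms)
  then have "(\<lambda>m. z * (diffs (diffs ?c) m * z ^ m)) sums (z * bessel_F'' nu z)"
    by (rule sums_mult)
  then have "(\<lambda>m. real (Suc m) * diffs ?c (Suc m) * z ^ Suc m) sums (z * bessel_F'' nu z)"
    by (simp add: diffs_def algebra_simps)
  then have "(\<lambda>m. real m * diffs ?c m * z ^ m) sums (z * bessel_F'' nu z)"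
    by (subst (asm) sums_Suc_iff) simp
  moreover have "(\<lambda>m. (nu + 1) * (diffs ?c m * z ^ m)) sums ((nu + 1) * bessel_F' nu z)"
    unfolding bessel_F'_def
    by (intro sums_mult summable_sums termdiff_converges_all summable_bessel_coeff assms)
  moreover have "(\<lambda>m. ?c m * z ^ m) sums bessel_F nu z"
    unfolding bessel_F_def by (intro summable_sums summable_bessel_coeff assms)
  ultimately have "(\<lambda>m. real m * diffs ?c m * z ^ m + (nu + 1) * (diffs ?c m * z ^ m) + ?c m * z ^ m)
      sums (z * bessel_F'' nu z + (nu + 1) * bessel_F' nu z + bessel_F nu z)"
    by (intro sums_add)
  moreover have "real m * diffs ?c m * z ^ m + (nu + 1) * (diffs ?c m * z ^ m) + ?c m * z ^ m
      = ((real m + nu + 1) * (real m + 1) * ?c (Suc m) + ?c m) * z ^ m" for m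
    by (simp add: diffs_def algebra_simps)
  ultimately show ?thesis
    by (simp add: bessel_coeff_Suc assms sums_0 sums_unique2)
qed

lemma bessel_J_eq_bessel_F:
  assumes "nu \<ge> 0" and "x > 0"
  shows "bessel_J nu x = (x / 2) powr nu * bessel_F nu ((x / 2)\<^sup>2)"
proof -
  have "(x / 2) powr (2 * real m + nu) = (x / 2) powr nu * ((x / 2)\<^sup>2) ^ m" for m
    using assms powr_realpow[of "x / 2" "2 * m"] by (simp add: powr_add power_mult)
  then show ?thesis
    unfolding bessel_J_def bessel_F_def bessel_coeff_def [symmetric]
    by (simp add: suminf_mult [symmetric] summable_bessel_coeff assms algebra_simps)
qed

lemma powr_half_has_derivative:
  assumes "x > 0"
  shows "((\<lambda>y. (y / 2) powr a) has_real_derivative a / x * (x / 2) powr a) (at x)"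
proof -
  have "((\<lambda>y. y / 2) has_real_derivative 1 / 2) (at x)"
    by (auto intro!: derivative_eq_intros)
  from DERIV_fun_powr [OF this] show ?thesis
    using assms by (simp add: powr_diff field_simps)
qed

lemma bessel_J_has_derivative:
  assumes "nu \<ge> 0" and "x > 0"
  shows "(bessel_J nu has_real_derivative
      (x / 2) powr nu / x * (nu * bessel_F nu ((x / 2)\<^sup>2) + 2 * (x / 2)\<^sup>2 * bessel_F' nu ((x / 2)\<^sup>2))) (at x)"
proof -
  have "((\<lambda>y. (y / 2)\<^sup>2) has_real_derivative x / 2) (at x)"
    by (auto intro!: derivative_eq_intros)
  from DERIV_mult [OF powr_half_has_derivative [OF assms(2)] bessel_F_chain [OF assms(1) this]]
  have "((\<lambda>y. (y / 2) powr nu * bessel_F nu ((y / 2)\<^sup>2)) has_real_derivative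
      (x / 2) powr nu / x * (nu * bessel_F nu ((x / 2)\<^sup>2) + 2 * (x / 2)\<^sup>2 * bessel_F' nu ((x / 2)\<^sup>2))) (at x)"
    using assms by (simp add: field_simps power2_eq_square)
  then show ?thesis
    by (rule has_field_derivative_transform_within_open [where S = "{0<..}"])
       (use assms bessel_J_eq_bessel_F in auto)
qed

lemma deriv_bessel_J:
  "nu \<ge> 0 \<Longrightarrow> x > 0 \<Longrightarrow> deriv (bessel_J nu) x =
    (x / 2) powr nu / x * (nu * bessel_F nu ((x / 2)\<^sup>2) + 2 * (x / 2)\<^sup>2 * bessel_F' nu ((x / 2)\<^sup>2))"
  by (rule DERIV_imp_deriv) (rule bessel_J_has_derivative)

lemma bessel_J_differentiable:
  "nu \<ge> 0 \<Longrightarrow> x > 0 \<Longrightarrow> bessel_J nu differentiable (at x)"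
  using bessel_J_has_derivative real_differentiable_def by blast

lemma bessel_equation:
  assumes "nu \<ge> 0" and "x > 0"
  shows "(deriv (bessel_J nu) has_real_derivative
      (nu\<^sup>2 / x\<^sup>2 - 1) * bessel_J nu x - deriv (bessel_J nu) x / x) (at x)"
proof -
  define z where "z = (x / 2)\<^sup>2"
  have "((\<lambda>y. (nu * bessel_F nu ((y / 2)\<^sup>2) + 2 * (y / 2)\<^sup>2 * bessel_F' nu ((y / 2)\<^sup>2)) / y)
      has_real_derivative - nu / x\<^sup>2 * bessel_F nu z + (nu + 1) / 2 * bessel_F' nu z + z * bessel_F'' nu z) (at x)"
    unfolding z_def using assms
    by (auto intro!: derivative_eq_intros simp: field_simps power2_eq_square)
  also have "z * bessel_F'' nu z = - (nu + 1) * bessel_F' nu z - bessel_F nu z"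
    using bessel_F_ode [OF assms(1), of z] by (simp add: algebra_simps)
  finally have "((\<lambda>y. (y / 2) powr nu * ((nu * bessel_F nu ((y / 2)\<^sup>2) + 2 * (y / 2)\<^sup>2 * bessel_F' nu ((y / 2)\<^sup>2)) / y))
      has_real_derivative (nu\<^sup>2 / x\<^sup>2 - 1) * ((x / 2) powr nu * bessel_F nu z)
        - (x / 2) powr nu / x * (nu * bessel_F nu z + 2 * z * bessel_F' nu z) / x) (at x)"
    by (rule DERIV_cong [OF DERIV_mult [OF powr_half_has_derivative [OF assms(2)]]])
       (use assms in \<open>simp add: z_def field_simps power2_eq_square\<close>)
  then show ?thesis
    unfolding z_def bessel_J_eq_bessel_F [OF assms] deriv_bessel_J [OF assms]
    by (rule has_field_derivative_transform_within_open [where S = "{0<..}"])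
       (use assms in \<open>auto simp: deriv_bessel_J\<close>)
qed

text \<open>On a type that is not well-ordered, \<open>LEAST\<close> only means something once a minimum is known to exist.\<close>

lemma Least_le_of_compact:
  fixes z :: "'a :: linorder_topology"
  assumes "P z" and "compact {y. P y \<and> y \<le> z}"
  shows "(LEAST y. P y) \<le> z"
proof -
  obtain m where m: "m \<in> {y. P y \<and> y \<le> z}" and min: "\<And>y. y \<in> {y. P y \<and> y \<le> z} \<Longrightarrow> m \<le> y"
    using compact_attains_inf [OF assms(2)] assms(1) by blast
  have "(LEAST y. P y) = m"
  proof (rule Least_equality)
    fix y assume "P y"
    then show "m \<le> y"
      using m min [of y] by (cases "y \<le> z") auto
  qed (use m in simp)
  then show ?thesis
    using m by simp
qed

lemma deriv_bessel_J_pos: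
  assumes "nu > 0" and "0 < x" and "x < (LEAST x. 0 < x \<and> deriv (bessel_J nu) x = 0)"
  shows "deriv (bessel_J nu) x > 0"
proof (rule ccontr)
  define D where "D y = nu * bessel_F nu ((y / 2)\<^sup>2) + 2 * (y / 2)\<^sup>2 * bessel_F' nu ((y / 2)\<^sup>2)" for y
  have deriv_eq: "deriv (bessel_J nu) y = (y / 2) powr nu / y * D y" if "y > 0" for y
    using deriv_bessel_J assms(1) that by (simp add: D_def)
  assume "\<not> deriv (bessel_J nu) x > 0"
  moreover have "(x / 2) powr nu / x > 0"
    using assms(2) by simp
  ultimately have "D x \<le> 0"
    using deriv_eq [OF assms(2)] mult_pos_pos [of "(x / 2) powr nu / x" "D x"] by linarith
  moreover have "D 0 > 0"
    using assms(1) by (simp add: D_def bessel_F_0 Gamma_real_pos)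
  moreover have "continuous_on {0..x} D"
    unfolding D_def using assms(1)
    by (intro continuous_at_imp_continuous_on ballI continuous_intros) auto
  ultimately obtain z where z: "0 \<le> z" "z \<le> x" "D z = 0"
    using IVT2' [of D x 0 0] assms(2) by auto
  have zeros: "{y. (0 < y \<and> deriv (bessel_J nu) y = 0) \<and> y \<le> z} = {y \<in> {0..z}. D y = 0}"
    using \<open>D 0 > 0\<close> by (force simp: deriv_eq order.order_iff_strict)
  have "closed {y \<in> {0..z}. D y = 0}"
    using \<open>continuous_on {0..x} D\<close> z(2)
    by (intro continuous_closed_preimage_constant) (auto elim: continuous_on_subset)
  then have "compact {y \<in> {0..z}. D y = 0}"
    unfolding compact_eq_bounded_closed by (auto intro: bounded_subset [OF bounded_closed_interval])
  moreover have "0 < z \<and> deriv (bessel_J nu) z = 0"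
    using z \<open>D 0 > 0\<close> by (auto simp: deriv_eq order.order_iff_strict)
  ultimately have "(LEAST x. 0 < x \<and> deriv (bessel_J nu) x = 0) \<le> z"
    by (intro Least_le_of_compact) (simp_all only: zeros)
  then show False
    using z(2) assms(3) by simp
qed

lemma bessel_J_pos:
  assumes "nu > 0" and "0 < x" and "x < (LEAST x. 0 < x \<and> deriv (bessel_J nu) x = 0)"
  shows "bessel_J nu x > 0"
proof -
  have "isCont (\<lambda>y. bessel_F nu ((y / 2)\<^sup>2)) 0"
    using assms(1) by (intro continuous_intros) auto
  moreover have "bessel_F nu ((0 / 2)\<^sup>2) > 0"
    using assms(1) by (simp add: bessel_F_0 Gamma_real_pos)
  ultimately have "\<forall>\<^sub>F y in at_right 0. bessel_F nu ((y / 2)\<^sup>2) > 0"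
    unfolding isCont_def filterlim_at_split by (auto dest: order_tendstoD(1))
  then obtain b where "b > 0" and b: "\<And>y. 0 < y \<Longrightarrow> y < b \<Longrightarrow> bessel_F nu ((y / 2)\<^sup>2) > 0"
    unfolding eventually_at_right_field by auto
  define e where "e = min b x / 2"
  have e: "0 < e" "e < x" "e < b"
    using \<open>b > 0\<close> assms(2) by (auto simp: e_def)
  have "0 < bessel_J nu e"
    using e b [of e] assms(1) by (simp add: bessel_J_eq_bessel_F)
  also have "bessel_J nu e < bessel_J nu x"
  proof (rule DERIV_pos_imp_increasing [OF \<open>e < x\<close>])
    fix y assume "e \<le> y" "y \<le> x"
    then have y: "0 < y" "y < (LEAST x. 0 < x \<and> deriv (bessel_J nu) x = 0)"
      using e assms(3) by auto
    have "(bessel_J nu has_real_derivative deriv (bessel_J nu) y) (at y)"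
      using assms(1) y(1) by (simp add: bessel_J_differentiable DERIV_deriv_iff_real_differentiable)
    then show "\<exists>d. (bessel_J nu has_real_derivative d) (at y) \<and> d > 0"
      using deriv_bessel_J_pos [OF assms(1) y] by blast
  qed
  finally show ?thesis .
qed

definition bessel_profile :: "real \<Rightarrow> real \<Rightarrow> real \<Rightarrow> real \<Rightarrow> real" where
  "bessel_profile nu a lm r = r powr a * bessel_J nu (lm * r)"

definition bessel_profile' :: "real \<Rightarrow> real \<Rightarrow> real \<Rightarrow> real \<Rightarrow> real" where
  "bessel_profile' nu a lm r =
    a / r * bessel_profile nu a lm r + lm * r powr a * deriv (bessel_J nu) (lm * r)"

lemma bessel_profile_has_derivative:
  assumes "nu \<ge> 0" and "lm > 0" and "r > 0"
  shows "(bessel_profile nu a lm has_real_derivative bessel_profile' nu a lm r) (at r)"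
proof -
  have "(bessel_J nu has_real_derivative deriv (bessel_J nu) (lm * r)) (at (lm * r))"
    using assms by (simp add: bessel_J_differentiable DERIV_deriv_iff_real_differentiable)
  from DERIV_mult [OF has_real_derivative_powr [OF assms(3)] DERIV_chain2 [OF this DERIV_cmult_Id]]
  show ?thesis
    unfolding bessel_profile_def [abs_def] bessel_profile'_def
    using assms by (simp add: powr_diff field_simps)
qed

lemma bessel_profile'_has_derivative:
  assumes "nu \<ge> 0" and "lm > 0" and "r > 0"
  shows "(bessel_profile' nu a lm has_real_derivative
      - ((1 - 2 * a) / r * bessel_profile' nu a lm r + (lm\<^sup>2 + (a\<^sup>2 - nu\<^sup>2) / r\<^sup>2) * bessel_profile nu a lm r)) (at r)"
proof -
  have "(bessel_J nu has_real_derivative deriv (bessel_J nu) (lm * r)) (at (lm * r))"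
    using assms by (simp add: bessel_J_differentiable DERIV_deriv_iff_real_differentiable)
  then have J: "((\<lambda>\<rho>. bessel_J nu (lm * \<rho>)) has_real_derivative deriv (bessel_J nu) (lm * r) * lm) (at r)"
    by (rule DERIV_chain2) (auto intro!: derivative_eq_intros)
  have "(deriv (bessel_J nu) has_real_derivative
      (nu\<^sup>2 / (lm * r)\<^sup>2 - 1) * bessel_J nu (lm * r) - deriv (bessel_J nu) (lm * r) / (lm * r)) (at (lm * r))"
    using assms by (intro bessel_equation) auto
  then have J': "((\<lambda>\<rho>. deriv (bessel_J nu) (lm * \<rho>)) has_real_derivative
      ((nu\<^sup>2 / (lm * r)\<^sup>2 - 1) * bessel_J nu (lm * r) - deriv (bessel_J nu) (lm * r) / (lm * r)) * lm) (at r)"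
    by (rule DERIV_chain2) (auto intro!: derivative_eq_intros)
  have P: "((\<lambda>\<rho>. \<rho> powr a) has_real_derivative a / r * r powr a) (at r)"
    using has_real_derivative_powr [OF assms(3)] assms(3) by (simp add: powr_diff field_simps)
  have Q: "((\<lambda>\<rho>. a / \<rho>) has_real_derivative - a / r\<^sup>2) (at r)"
    using assms(3) by (auto intro!: derivative_eq_intros simp: power2_eq_square)
  have "((\<lambda>\<rho>. a / \<rho> * (\<rho> powr a * bessel_J nu (lm * \<rho>)) + lm * (\<rho> powr a * deriv (bessel_J nu) (lm * \<rho>)))
      has_real_derivative
      - ((1 - 2 * a) / r * bessel_profile' nu a lm r + (lm\<^sup>2 + (a\<^sup>2 - nu\<^sup>2) / r\<^sup>2) * bessel_profile nu a lm r)) (at r)"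
    by (rule DERIV_cong [OF DERIV_add [OF DERIV_mult [OF Q DERIV_mult [OF P J]] DERIV_cmult [OF DERIV_mult [OF P J']]]])
       (use assms in \<open>simp add: bessel_profile_def bessel_profile'_def field_simps power2_eq_square\<close>)
  then show ?thesis
    by (simp add: bessel_profile_def bessel_profile'_def [abs_def] algebra_simps)
qed

lemma bessel_profile_pos:
  assumes "nu > 0" and "lm > 0" and "r > 0"
    and "lm * r < (LEAST x. 0 < x \<and> deriv (bessel_J nu) x = 0)"
  shows "bessel_profile nu a lm r > 0"
  using assms bessel_J_pos [of nu "lm * r"] by (simp add: bessel_profile_def)

lemma bessel_profile'_pos:
  assumes "nu > 0" and "a \<ge> 0" and "lm > 0" and "r > 0"
    and "lm * r < (LEAST x. 0 < x \<and> deriv (bessel_J nu) x = 0)"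
  shows "bessel_profile' nu a lm r > 0"
proof -
  have "a / r * bessel_profile nu a lm r \<ge> 0"
    using assms bessel_profile_pos [of nu lm r a] by simp
  moreover have "lm * r powr a * deriv (bessel_J nu) (lm * r) > 0"
    using assms deriv_bessel_J_pos [of nu "lm * r"] by simp
  ultimately show ?thesis
    by (simp add: bessel_profile'_def)
qed

lemma nu_of_radicand_pos: "36 * (real n)\<^sup>2 - 96 * real n + 61 > 0"
proof (cases "n \<ge> 2")
  case True
  then have "(6 * real n - 8)\<^sup>2 \<ge> 4\<^sup>2"
    by (intro power_mono) auto
  then show ?thesis
    by (simp add: power2_eq_square algebra_simps)
next
  case False
  then have "n = 0 \<or> n = 1" by auto
  then show ?thesis by auto
qed

lemma nu_of_squared: "(nu_of n)\<^sup>2 = (36 * (real n)\<^sup>2 - 96 * real n + 61) / 36"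
  using nu_of_radicand_pos [of n] by (simp add: nu_of_def power_divide)

lemma nu_of_pos: "nu_of n > 0"
  using nu_of_radicand_pos [of n] by (simp add: nu_of_def)

lemma ustar_cube: "r \<ge> 0 \<Longrightarrow> (ustar n r) ^ 3 = - (9 * real n - 15) * r"
proof -
  assume "r \<ge> 0"
  then have "(r powr (1 / 3)) ^ 3 = r"
    by (cases "r = 0") (simp_all add: powr_power)
  moreover have "(ustar n r) ^ 3 = - ((alpha_of n) ^ 3 * (r powr (1 / 3)) ^ 3)"
    by (simp add: ustar_def power_mult_distrib)
  ultimately show ?thesis
    by (simp add: alpha_of_def odd_real_root_pow algebra_simps)
qed

lemma ustar_has_derivative:
  "r > 0 \<Longrightarrow> (ustar n has_real_derivative ustar n r / (3 * r)) (at r)"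
  unfolding ustar_def [abs_def]
  by (rule DERIV_cong [OF DERIV_cmult [OF has_real_derivative_powr]])
     (use powr_diff [of r "1 / 3" 1] in simp_all)

lemma ustar'_has_derivative:
  "r > 0 \<Longrightarrow> ((\<lambda>\<rho>. ustar n \<rho> / (3 * \<rho>)) has_real_derivative - 2 * ustar n r / (9 * r\<^sup>2)) (at r)"
  by (rule DERIV_cong [OF DERIV_divide [OF ustar_has_derivative DERIV_cmult_Id]])
     (simp_all add: field_simps power2_eq_square)

lemma ustar'_cube:
  assumes "r > 0"
  shows "(ustar n r / (3 * r)) ^ 3 = - (3 * real n - 5) / (9 * r\<^sup>2)"
proof -
  have "(ustar n r / (3 * r)) ^ 3 = - (9 * real n - 15) * r / (3 * r) ^ 3"
    using assms by (simp add: power_divide ustar_cube)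
  then show ?thesis
    using assms by (simp add: field_simps power2_eq_square power3_eq_cube)
qed

lemma ustar_steady_state:
  assumes "r > 0"
  shows "- 2 * ustar n r / (9 * r\<^sup>2) + (real n - 1) / r * (ustar n r / (3 * r))
      + ustar n r * (ustar n r / (3 * r)) ^ 3 = 0"
  unfolding ustar'_cube [OF assms] using assms by (simp add: field_simps power2_eq_square)

text \<open>The equation linearised at \<open>u*\<close> is \<open>w'' + (1 - 2a)/r w' + (a\<^sup>2 - \<nu>\<^sup>2)/r\<^sup>2 w\<close> with
  \<open>a = n - 3/2\<close>, whose solutions are \<open>r\<^sup>a J\<^sub>\<nu>(\<lambda>r)\<close>: this is where \<open>\<alpha>\<close> and \<open>\<nu>\<close> come from.\<close>

lemma ustar_linearization:
  assumes "r > 0"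
  shows "(real n - 1) / r + 3 * ustar n r * (ustar n r / (3 * r))\<^sup>2 = (1 - 2 * (real n - 3 / 2)) / r"
    and "(ustar n r / (3 * r)) ^ 3 = ((real n - 3 / 2)\<^sup>2 - (nu_of n)\<^sup>2) / r\<^sup>2"
proof -
  have "3 * ustar n r * (ustar n r / (3 * r))\<^sup>2 = (ustar n r) ^ 3 / (3 * r\<^sup>2)"
    using assms by (simp add: field_simps power2_eq_square power3_eq_cube)
  also have "\<dots> = - (3 * real n - 5) / r"
    unfolding ustar_cube [OF less_imp_le [OF assms]] using assms by (simp add: field_simps power2_eq_square)
  finally have coeff: "3 * ustar n r * (ustar n r / (3 * r))\<^sup>2 = - (3 * real n - 5) / r" .
  show "(real n - 1) / r + 3 * ustar n r * (ustar n r / (3 * r))\<^sup>2 = (1 - 2 * (real n - 3 / 2)) / r"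
    unfolding coeff using assms by (simp add: field_simps)
  show "(ustar n r / (3 * r)) ^ 3 = ((real n - 3 / 2)\<^sup>2 - (nu_of n)\<^sup>2) / r\<^sup>2"
    unfolding ustar'_cube [OF assms] nu_of_squared using assms by (simp add: field_simps power2_eq_square)
qed

lemma ustar_nonpos: "n \<ge> 2 \<Longrightarrow> ustar n r \<le> 0"
  by (simp add: ustar_def alpha_of_def)

lemma perturbed_steady_state_subsolution:
  fixes k A p p2 b q q2 ut :: real
  assumes steady: "p2 + k * p + A * p ^ 3 = 0"
    and linearized: "ut = - (q2 + (k + 3 * A * p\<^sup>2) * q + p ^ 3 * b)"
    and "A \<le> 0" and "p \<le> 0" and "b \<ge> 0" and "q \<ge> 0"
  shows "ut \<le> (p2 - q2) + k * (p - q) + (A - b) * (p - q) ^ 3"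
proof -
  have "(p2 - q2) + k * (p - q) + (A - b) * (p - q) ^ 3 - ut
      = 3 * (A * p) * q\<^sup>2 - A * q ^ 3 + 3 * b * p\<^sup>2 * q - 3 * b * (p * q\<^sup>2) + b * q ^ 3"
    unfolding linearized using steady
    by (simp add: algebra_simps power2_eq_square power3_eq_cube)
  moreover have "3 * (A * p) * q\<^sup>2 \<ge> 0"
    using assms(3,4) by (simp add: mult_nonpos_nonpos)
  moreover have "A * q ^ 3 \<le> 0" and "b * (p * q\<^sup>2) \<le> 0"
    using assms(3-6) by (simp_all add: mult_nonpos_nonneg mult_nonneg_nonpos)
  moreover have "3 * b * p\<^sup>2 * q \<ge> 0" and "b * q ^ 3 \<ge> 0"
    using assms(5,6) by simp_all
  ultimately show ?thesis
    by linarith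
qed

lemma usol_eq_bessel_profile:
  "usol n C lm r t = ustar n r - C * exp (- (lm * lm * t)) * bessel_profile (nu_of n) (real n - 3 / 2) lm r"
  by (simp add: usol_def vfun_def bessel_profile_def)

lemma usol_time_derivative:
  "((\<lambda>s. usol n C lm r s) has_real_derivative
      lm\<^sup>2 * (C * exp (- (lm * lm * t)) * bessel_profile (nu_of n) (real n - 3 / 2) lm r)) (at t)"
  unfolding usol_eq_bessel_profile
  by (auto intro!: derivative_eq_intros simp: power2_eq_square)

lemma usol_radial_derivative:
  assumes "lm > 0" and "r > 0"
  shows "((\<lambda>\<rho>. usol n C lm \<rho> t) has_real_derivative
      ustar n r / (3 * r) - C * exp (- (lm * lm * t)) * bessel_profile' (nu_of n) (real n - 3 / 2) lm r) (at r)"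
  unfolding usol_eq_bessel_profile
  using assms nu_of_pos [of n]
  by (intro DERIV_diff DERIV_cmult ustar_has_derivative bessel_profile_has_derivative) auto

lemma usol_radial_second_derivative:
  fixes n :: nat and C lm r t :: real
  assumes "lm > 0" and "r > 0"
  defines "a \<equiv> real n - 3 / 2" and "nu \<equiv> nu_of n"
  shows "((\<lambda>\<rho>. deriv (\<lambda>\<sigma>. usol n C lm \<sigma> t) \<rho>) has_real_derivative
      - 2 * ustar n r / (9 * r\<^sup>2) + C * exp (- (lm * lm * t)) *
        ((1 - 2 * a) / r * bessel_profile' nu a lm r + (lm\<^sup>2 + (a\<^sup>2 - nu\<^sup>2) / r\<^sup>2) * bessel_profile nu a lm r)) (at r)"
proof -
  have "((\<lambda>\<rho>. ustar n \<rho> / (3 * \<rho>) - C * exp (- (lm * lm * t)) * bessel_profile' nu a lm \<rho>) has_real_derivative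
      - 2 * ustar n r / (9 * r\<^sup>2) + C * exp (- (lm * lm * t)) *
        ((1 - 2 * a) / r * bessel_profile' nu a lm r + (lm\<^sup>2 + (a\<^sup>2 - nu\<^sup>2) / r\<^sup>2) * bessel_profile nu a lm r)) (at r)"
    using nu_of_pos [of n] unfolding nu_def
    by (rule DERIV_cong [OF DERIV_diff [OF ustar'_has_derivative [OF assms(2)]
          DERIV_cmult [OF bessel_profile'_has_derivative [OF less_imp_le assms(1,2)]]]])
       (simp add: algebra_simps)
  then show ?thesis
    by (rule has_field_derivative_transform_within_open [where S = "{0<..}"])
       (use assms in \<open>auto intro!: DERIV_imp_deriv [symmetric] usol_radial_derivative\<close>)
qed

theorem mainTheorem9:
  fixes n :: nat and C lm R r t :: real
  assumes "n \<ge> 2" and "C > 0" and "lm > 0" and "R > 0"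
    and "R < min (x1_of n / lm) (sqrt (3/8 * (3 * real n - 5) * (2 * real n - 3)^3))"
    and "0 < r" and "r < R" and "t > 0"
  shows "\<exists>ut ur urr.
      ((\<lambda>s. usol n C lm r s) has_real_derivative ut) (at t) \<and>
      ((\<lambda>\<rho>. usol n C lm \<rho> t) has_real_derivative ur) (at r) \<and>
      ((\<lambda>\<rho>. deriv (\<lambda>\<sigma>. usol n C lm \<sigma> t) \<rho>) has_real_derivative urr) (at r) \<and>
      ut \<le> urr + (real n - 1) / r * ur + usol n C lm r t * ur ^ 3"
proof -
  let ?a = "real n - 3 / 2" and ?c = "C * exp (- (lm * lm * t))"
  let ?u = "ustar n r" and ?p = "ustar n r / (3 * r)"
  let ?g = "bessel_profile (nu_of n) ?a lm r" and ?g' = "bessel_profile' (nu_of n) ?a lm r"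
  let ?v = "?c * ?g" and ?vr = "?c * ?g'"
    and ?vrr = "- ?c * ((1 - 2 * ?a) / r * ?g' + (lm\<^sup>2 + (?a\<^sup>2 - (nu_of n)\<^sup>2) / r\<^sup>2) * ?g)"
  have "lm * R < x1_of n"
    using assms(3,5) by (simp add: field_simps)
  then have "lm * r < x1_of n"
    using mult_strict_left_mono [OF assms(7,3)] by linarith
  then have "?g > 0" and "?g' > 0"
    using assms(1,3,6) nu_of_pos [of n] unfolding x1_of_def
    by (auto intro!: bessel_profile_pos bessel_profile'_pos)
  have "lm\<^sup>2 * ?v = - (?vrr + ((real n - 1) / r + 3 * ?u * ?p\<^sup>2) * ?vr + ?p ^ 3 * ?v)"
    unfolding ustar_linearization [OF assms(6)] using assms(6) by (simp add: field_simps power2_eq_square)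
  then have "lm\<^sup>2 * ?v \<le> (- 2 * ?u / (9 * r\<^sup>2) - ?vrr) + (real n - 1) / r * (?p - ?vr) + (?u - ?v) * (?p - ?vr) ^ 3"
    using ustar_nonpos [OF assms(1), of r] assms(2,6) \<open>?g > 0\<close> \<open>?g' > 0\<close>
    by (intro perturbed_steady_state_subsolution [OF ustar_steady_state [OF assms(6)]])
       (simp_all add: divide_nonpos_pos)
  then show ?thesis
    using usol_time_derivative usol_radial_derivative [OF assms(3,6)]
      usol_radial_second_derivative [OF assms(3,6)]
    by (intro exI conjI) (auto simp: usol_eq_bessel_profile)
qed

end
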